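(* The group $\Gamma^{(2)} = \text{GU}_2(D)\cap U_2$ consists of the following set of matrices: \[\Gamma^{(2)} =\text{SU}_{2}(D)\cap g^{-1}\text{GL}_2(\mathcal{O})g.\]
   Context: $D$ is a definite quaternion algebra over $\mathbb{Q}$ ramified exactly at $\{p,\infty\}$ for a fixed prime $p$, with standard involution $x\mapsto\overline{x}$, and $\mathcal{O}$ is a fixed maximal order. $\text{GU}_2(D) = \{g\in M_2(D)\,|\,g\overline{g}^T = \mu(g)I,\ \mu(g)\in\mathbb{Q}^\times\}$ is the unitary similitude group, and $\text{SU}_2(D)$ denotes its elements with similitude $\mu=1$. Fix $g\in\text{GL}_2(D)$ such that the left $\mathcal{O}$-lattice $\mathcal{O}^2 g\subseteq D^2$ lies in the non-principal genus (i.e. its completion at $p$ is not locally equivalent to $\mathcal{O}_p^2$). Let $U_2 = \text{Stab}_{\text{GU}_2(D_{\mathbb{A}_f})}(\mathcal{O}^2 g)$ be the corresponding open compact subgroup of $\text{GU}_2(D_{\mathbb{A}_f})$, and $\Gamma^{(2)} = \text{GU}_2(D)\cap U_2$, i.e. $\Gamma^{(2)} = \text{Stab}_{\text{GU}_2(D)}(\mathcal{O}^2 g)$. *)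

theory Defs
  imports Complex_Main "HOL-Computational_Algebra.Primes"
begin

text \<open>Elements x0 + x1 i + x2 j + x3 k with i^2 = a, j^2 = b, k = ij = -ji.\<close>

datatype quat = Quat rat rat rat rat

fun qadd :: "quat \<Rightarrow> quat \<Rightarrow> quat" where
  "qadd (Quat x0 x1 x2 x3) (Quat y0 y1 y2 y3) = Quat (x0+y0) (x1+y1) (x2+y2) (x3+y3)"

fun qneg :: "quat \<Rightarrow> quat" where
  "qneg (Quat x0 x1 x2 x3) = Quat (-x0) (-x1) (-x2) (-x3)"

definition qsub :: "quat \<Rightarrow> quat \<Rightarrow> quat" where
  "qsub x y = qadd x (qneg y)"

fun qsmul :: "rat \<Rightarrow> quat \<Rightarrow> quat" where
  "qsmul c (Quat x0 x1 x2 x3) = Quat (c*x0) (c*x1) (c*x2) (c*x3)"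

fun qmul :: "int \<Rightarrow> int \<Rightarrow> quat \<Rightarrow> quat \<Rightarrow> quat" where
  "qmul a b (Quat x0 x1 x2 x3) (Quat y0 y1 y2 y3) =
     (let a' = (of_int a :: rat); b' = of_int b in
      Quat (x0*y0 + a'*x1*y1 + b'*x2*y2 - a'*b'*x3*y3)
           (x0*y1 + x1*y0 - b'*x2*y3 + b'*x3*y2)
           (x0*y2 + x2*y0 + a'*x1*y3 - a'*x3*y1)
           (x0*y3 + x3*y0 + x1*y2 - x2*y1))"

fun qconj :: "quat \<Rightarrow> quat" where
  "qconj (Quat x0 x1 x2 x3) = Quat x0 (-x1) (-x2) (-x3)"

definition qrat :: "rat \<Rightarrow> quat" where
  "qrat c = Quat c 0 0 0"

definition qzero :: quat where "qzero = qrat 0"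
definition qone :: quat where "qone = qrat 1"

text \<open>Ramified at infinity: D tensor R is a division algebra, i.e. the reduced norm
  form x0^2 - a x1^2 - b x2^2 + ab x3^2 is anisotropic over R.\<close>
definition ram_inf :: "int \<Rightarrow> int \<Rightarrow> bool" where
  "ram_inf a b \<longleftrightarrow> (\<forall>x0 x1 x2 x3 :: real. (x0, x1, x2, x3) \<noteq> (0, 0, 0, 0) \<longrightarrow>
      x0^2 - of_int a * x1^2 - of_int b * x2^2 + of_int a * of_int b * x3^2 \<noteq> 0)"

text \<open>l-adic Cauchy sequences of integers and l-adic null sequences (these model Z_l).\<close>
definition int_cauchy :: "int \<Rightarrow> (nat \<Rightarrow> int) \<Rightarrow> bool" where
  "int_cauchy l s \<longleftrightarrow> (\<forall>N. \<exists>n0. \<forall>m\<ge>n0. \<forall>n\<ge>n0. l ^ N dvd (s m - s n))"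

definition int_tendsto0 :: "int \<Rightarrow> (nat \<Rightarrow> int) \<Rightarrow> bool" where
  "int_tendsto0 l s \<longleftrightarrow> (\<forall>N. \<exists>n0. \<forall>n\<ge>n0. l ^ N dvd s n)"

text \<open>D splits at the prime l iff D tensor Q_l is not a division algebra, i.e. the
  reduced norm form has a nontrivial zero over Q_l, equivalently a primitive zero in
  Z_l^4; a point of Z_l^4 is given as the limit of an l-adic Cauchy sequence of integer
  vectors (primitive: not all coordinates divisible by l).\<close>
definition split_at :: "int \<Rightarrow> int \<Rightarrow> int \<Rightarrow> bool" where
  "split_at a b l \<longleftrightarrow> (\<exists>x0 x1 x2 x3 :: nat \<Rightarrow> int.
      int_cauchy l x0 \<and> int_cauchy l x1 \<and> int_cauchy l x2 \<and> int_cauchy l x3 \<and>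
      (\<forall>n. \<not> (l dvd x0 n \<and> l dvd x1 n \<and> l dvd x2 n \<and> l dvd x3 n)) \<and>
      int_tendsto0 l (\<lambda>n. (x0 n)^2 - a * (x1 n)^2 - b * (x2 n)^2 + a * b * (x3 n)^2))"

definition ram_at :: "int \<Rightarrow> int \<Rightarrow> int \<Rightarrow> bool" where
  "ram_at a b l \<longleftrightarrow> \<not> split_at a b l"

definition ramified_exactly_p_inf :: "int \<Rightarrow> int \<Rightarrow> int \<Rightarrow> bool" where
  "ramified_exactly_p_inf a b p \<longleftrightarrow> a \<noteq> 0 \<and> b \<noteq> 0 \<and> ram_inf a b \<and> ram_at a b p \<and>
      (\<forall>l. prime l \<and> l \<noteq> p \<longrightarrow> \<not> ram_at a b l)"

definition qlin4 :: "(nat \<Rightarrow> rat) \<Rightarrow> (nat \<Rightarrow> quat) \<Rightarrow> quat" where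
  "qlin4 c e = qadd (qadd (qsmul (c 0) (e 0)) (qsmul (c 1) (e 1)))
                    (qadd (qsmul (c 2) (e 2)) (qsmul (c 3) (e 3)))"

definition is_order :: "int \<Rightarrow> int \<Rightarrow> quat set \<Rightarrow> bool" where
  "is_order a b \<O> \<longleftrightarrow> qone \<in> \<O> \<and> (\<forall>x\<in>\<O>. \<forall>y\<in>\<O>. qmul a b x y \<in> \<O>) \<and>
     (\<exists>e :: nat \<Rightarrow> quat. \<O> = {qlin4 (\<lambda>i. of_int (n i)) e | n. True} \<and>
        (\<forall>c. qlin4 c e = qzero \<longrightarrow> (\<forall>i<4. c i = 0)))"

definition is_max_order :: "int \<Rightarrow> int \<Rightarrow> quat set \<Rightarrow> bool" where
  "is_max_order a b \<O> \<longleftrightarrow> is_order a b \<O> \<and> (\<forall>\<O>'. is_order a b \<O>' \<and> \<O> \<subseteq> \<O>' \<longrightarrow> \<O>' = \<O>)"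

text \<open>M2 m11 m12 m21 m22\<close>
datatype m2 = M2 quat quat quat quat

fun mmul :: "int \<Rightarrow> int \<Rightarrow> m2 \<Rightarrow> m2 \<Rightarrow> m2" where
  "mmul a b (M2 x11 x12 x21 x22) (M2 y11 y12 y21 y22) =
     M2 (qadd (qmul a b x11 y11) (qmul a b x12 y21)) (qadd (qmul a b x11 y12) (qmul a b x12 y22))
        (qadd (qmul a b x21 y11) (qmul a b x22 y21)) (qadd (qmul a b x21 y12) (qmul a b x22 y22))"

fun msub :: "m2 \<Rightarrow> m2 \<Rightarrow> m2" where
  "msub (M2 x11 x12 x21 x22) (M2 y11 y12 y21 y22) =
     M2 (qsub x11 y11) (qsub x12 y12) (qsub x21 y21) (qsub x22 y22)"

fun mstar :: "m2 \<Rightarrow> m2" where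
  "mstar (M2 x11 x12 x21 x22) = M2 (qconj x11) (qconj x21) (qconj x12) (qconj x22)"

definition mscal :: "rat \<Rightarrow> m2" where
  "mscal c = M2 (qrat c) qzero qzero (qrat c)"

definition mid :: m2 where "mid = mscal 1"

fun mentries :: "m2 \<Rightarrow> quat set" where
  "mentries (M2 x11 x12 x21 x22) = {x11, x12, x21, x22}"

definition in_GL2 :: "int \<Rightarrow> int \<Rightarrow> m2 \<Rightarrow> bool" where
  "in_GL2 a b g \<longleftrightarrow> (\<exists>h. mmul a b g h = mid \<and> mmul a b h g = mid)"

definition in_GL2O :: "int \<Rightarrow> int \<Rightarrow> quat set \<Rightarrow> m2 \<Rightarrow> bool" where
  "in_GL2O a b \<O> k \<longleftrightarrow> mentries k \<subseteq> \<O> \<and>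
     (\<exists>h. mentries h \<subseteq> \<O> \<and> mmul a b k h = mid \<and> mmul a b h k = mid)"

definition in_GU :: "int \<Rightarrow> int \<Rightarrow> m2 \<Rightarrow> bool" where
  "in_GU a b g \<longleftrightarrow> (\<exists>\<mu>::rat. \<mu> \<noteq> 0 \<and> mmul a b g (mstar g) = mscal \<mu>)"

definition in_SU :: "int \<Rightarrow> int \<Rightarrow> m2 \<Rightarrow> bool" where
  "in_SU a b g \<longleftrightarrow> mmul a b g (mstar g) = mid"

text \<open>Row vectors in D^2 acted on from the right.\<close>
fun vecmat :: "int \<Rightarrow> int \<Rightarrow> quat \<times> quat \<Rightarrow> m2 \<Rightarrow> quat \<times> quat" where
  "vecmat a b (x, y) (M2 m11 m12 m21 m22) =
     (qadd (qmul a b x m11) (qmul a b y m21), qadd (qmul a b x m12) (qmul a b y m22))"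

definition lattice :: "int \<Rightarrow> int \<Rightarrow> quat set \<Rightarrow> m2 \<Rightarrow> (quat \<times> quat) set" where
  "lattice a b \<O> g = {vecmat a b (x, y) g | x y. x \<in> \<O> \<and> y \<in> \<O>}"

definition Gamma2 :: "int \<Rightarrow> int \<Rightarrow> quat set \<Rightarrow> m2 \<Rightarrow> m2 set" where
  "Gamma2 a b \<O> g = {\<gamma>. in_GU a b \<gamma> \<and> (\<lambda>v. vecmat a b v \<gamma>) ` lattice a b \<O> g = lattice a b \<O> g}"

text \<open>x lies in p^N O_p (tested inside D: x in p^N O_(p), O_(p) the localisation of \<O> at p).\<close>
definition qsmall :: "quat set \<Rightarrow> int \<Rightarrow> nat \<Rightarrow> quat \<Rightarrow> bool" where
  "qsmall \<O> p N x \<longleftrightarrow> (\<exists>m::int. \<not> p dvd m \<and> qsmul (of_int m / of_int p ^ N) x \<in> \<O>)"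

definition msmall :: "quat set \<Rightarrow> int \<Rightarrow> nat \<Rightarrow> m2 \<Rightarrow> bool" where
  "msmall \<O> p N M \<longleftrightarrow> (\<forall>x\<in>mentries M. qsmall \<O> p N x)"

definition mtendsto0 :: "quat set \<Rightarrow> int \<Rightarrow> (nat \<Rightarrow> m2) \<Rightarrow> bool" where
  "mtendsto0 \<O> p s \<longleftrightarrow> (\<forall>N. \<exists>n0. \<forall>n\<ge>n0. msmall \<O> p N (s n))"

definition mcauchy :: "quat set \<Rightarrow> int \<Rightarrow> (nat \<Rightarrow> m2) \<Rightarrow> bool" where
  "mcauchy \<O> p s \<longleftrightarrow> (\<forall>N. \<exists>n0. \<forall>m\<ge>n0. \<forall>n\<ge>n0. msmall \<O> p N (msub (s m) (s n)))"

text \<open>(\<O>^2 g)_p is locally equivalent to O_p^2, i.e. (\<O>^2 g)_p = O_p^2 h for some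
  h in GU_2(D_p).  Since (\<O>^2 g)_p = O_p^2 g, this means h = K g with K in GL_2(O_p) and
  K g (K g)^* = mu I with mu in Q_p^x = p^Z Z_p^x.  K (and its inverse K') are given as
  p-adic limits of matrices over \<O>, mu = p^e u with u a p-adic limit of p-adic units.\<close>
definition locally_equiv_O2_at :: "int \<Rightarrow> int \<Rightarrow> quat set \<Rightarrow> int \<Rightarrow> m2 \<Rightarrow> bool" where
  "locally_equiv_O2_at a b \<O> p g \<longleftrightarrow>
     (\<exists>(k :: nat \<Rightarrow> m2) (k' :: nat \<Rightarrow> m2) (e :: int) (u :: nat \<Rightarrow> int).
        (\<forall>n. mentries (k n) \<subseteq> \<O> \<and> mentries (k' n) \<subseteq> \<O> \<and> \<not> p dvd u n) \<and>
        mcauchy \<O> p k \<and> mcauchy \<O> p k' \<and> int_cauchy p u \<and>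
        mtendsto0 \<O> p (\<lambda>n. msub (mmul a b (k n) (k' n)) mid) \<and>
        mtendsto0 \<O> p (\<lambda>n. msub (mmul a b (k' n) (k n)) mid) \<and>
        mtendsto0 \<O> p (\<lambda>n. msub (mmul a b (mmul a b (k n) (mmul a b g (mstar g))) (mstar (k n)))
                                 (mscal ((of_int p :: rat) powi e * of_int (u n)))))"

definition nonprincipal_genus :: "int \<Rightarrow> int \<Rightarrow> quat set \<Rightarrow> int \<Rightarrow> m2 \<Rightarrow> bool" where
  "nonprincipal_genus a b \<O> p g \<longleftrightarrow> \<not> locally_equiv_O2_at a b \<O> p g"

end

theory Submission
  imports Defs
begin

(*
  If gamma gamma^* = mu I, then v |-> v gamma multiplies the hermitian norm |x|^2 + |y|^2
  on D^2 by mu.  Ramification at infinity makes this norm positive definite, and on the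
  lattice L = O^2 g it takes values in a discrete set (bounded denominators).  Since gamma
  permutes L, both mu and 1/mu are at least 1, so mu = 1.  Then gamma^* is a two-sided
  inverse of gamma, and O^2 g gamma = O^2 g says precisely that g gamma g^-1 and its
  inverse have entries in O.
*)

lemma qadd_assoc: "qadd (qadd x y) z = qadd x (qadd y z)"
  by (cases x; cases y; cases z) simp

lemma qadd_commute: "qadd x y = qadd y x"
  by (cases x; cases y) simp

lemma qadd_left_commute: "qadd x (qadd y z) = qadd y (qadd x z)"
  by (cases x; cases y; cases z) simp

lemmas qadd_ac = qadd_assoc qadd_commute qadd_left_commute

lemma qadd_qzero [simp]: "qadd qzero x = x" "qadd x qzero = x"
  by (cases x; simp add: qzero_def qrat_def)+

lemma qmul_assoc: "qmul a b (qmul a b x y) z = qmul a b x (qmul a b y z)"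
  by (cases x; cases y; cases z) (simp add: Let_def algebra_simps)

lemma qmul_qadd_left: "qmul a b (qadd x y) z = qadd (qmul a b x z) (qmul a b y z)"
  by (cases x; cases y; cases z) (simp add: Let_def algebra_simps)

lemma qmul_qadd_right: "qmul a b x (qadd y z) = qadd (qmul a b x y) (qmul a b x z)"
  by (cases x; cases y; cases z) (simp add: Let_def algebra_simps)

lemma qmul_qone [simp]: "qmul a b qone x = x" "qmul a b x qone = x"
  by (cases x; simp add: qone_def qrat_def)+

lemma qmul_qzero [simp]: "qmul a b qzero x = qzero" "qmul a b x qzero = qzero"
  by (cases x; simp add: qzero_def qrat_def)+

lemma qrat_inject [simp]: "qrat c = qrat d \<longleftrightarrow> c = d"
  by (simp add: qrat_def)

lemma qone_neq_qzero [simp]: "qone \<noteq> qzero" "qzero \<noteq> qone"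
  by (simp_all add: qone_def qzero_def)

lemma mid_eq: "mid = M2 qone qzero qzero qone"
  by (simp add: mid_def mscal_def qone_def)

lemma mmul_assoc: "mmul a b (mmul a b A B) C = mmul a b A (mmul a b B C)"
  by (cases A; cases B; cases C) (simp add: qmul_qadd_left qmul_qadd_right qmul_assoc qadd_ac)

lemma mmul_mid [simp]: "mmul a b mid A = A" "mmul a b A mid = A"
  by (cases A; simp add: mid_eq)+

lemma vecmat_mmul: "vecmat a b (vecmat a b v A) B = vecmat a b v (mmul a b A B)"
  by (cases v; cases A; cases B) (simp add: qmul_qadd_left qmul_qadd_right qmul_assoc qadd_ac)

lemma vecmat_mid [simp]: "vecmat a b v mid = v"
  by (cases v) (simp add: mid_eq)

lemma vecmat_zero [simp]: "vecmat a b (qzero, qzero) A = (qzero, qzero)"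
  by (cases A) simp

lemma m2_eqI_rows:
  assumes "vecmat a b (qone, qzero) A = vecmat a b (qone, qzero) B"
    and "vecmat a b (qzero, qone) A = vecmat a b (qzero, qone) B"
  shows "A = B"
  using assms by (cases A; cases B) simp

lemma qconj_qadd: "qconj (qadd x y) = qadd (qconj x) (qconj y)"
  by (cases x; cases y) simp

lemma qconj_qmul: "qconj (qmul a b x y) = qmul a b (qconj y) (qconj x)"
  by (cases x; cases y) (simp add: Let_def algebra_simps)

lemma qconj_qconj [simp]: "qconj (qconj x) = x"
  by (cases x) simp

definition nrd :: "int \<Rightarrow> int \<Rightarrow> quat \<Rightarrow> rat" where
  "nrd a b x = (case x of Quat x0 x1 x2 x3 \<Rightarrow>
     x0^2 - of_int a * x1^2 - of_int b * x2^2 + of_int a * of_int b * x3^2)"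

fun hnorm :: "int \<Rightarrow> int \<Rightarrow> quat \<times> quat \<Rightarrow> rat" where
  "hnorm a b (x, y) = nrd a b x + nrd a b y"

fun herm :: "int \<Rightarrow> int \<Rightarrow> quat \<times> quat \<Rightarrow> quat \<times> quat \<Rightarrow> quat" where
  "herm a b (x, y) (x', y') = qadd (qmul a b x (qconj x')) (qmul a b y (qconj y'))"

lemma herm_self: "herm a b v v = qrat (hnorm a b v)"
  by (cases v; rename_tac x y; case_tac x; case_tac y)
     (simp add: nrd_def qrat_def Let_def algebra_simps power2_eq_square)

lemma herm_vecmat: "herm a b (vecmat a b v A) w = herm a b v (vecmat a b w (mstar A))"
  by (cases v; cases w; cases A)
     (simp add: qconj_qadd qconj_qmul qmul_qadd_left qmul_qadd_right qmul_assoc qadd_ac)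

lemma herm_vecmat_mscal: "herm a b v (vecmat a b v (mscal c)) = qrat (c * hnorm a b v)"
  by (cases v; rename_tac x y; case_tac x; case_tac y)
     (simp add: mscal_def nrd_def qrat_def qzero_def Let_def algebra_simps power2_eq_square)

lemma hnorm_vecmat_similitude:
  assumes "mmul a b A (mstar A) = mscal c"
  shows "hnorm a b (vecmat a b v A) = c * hnorm a b v"
proof -
  have "qrat (hnorm a b (vecmat a b v A)) = herm a b v (vecmat a b (vecmat a b v A) (mstar A))"
    by (simp add: herm_self [symmetric] herm_vecmat)
  also have "\<dots> = qrat (c * hnorm a b v)"
    by (simp add: vecmat_mmul assms herm_vecmat_mscal)
  finally show ?thesis by simp
qed

lemma ex_less_power:
  fixes x y :: "'a :: archimedean_field"
  assumes "1 < x"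
  shows "\<exists>n. y < x ^ n"
proof -
  obtain n where "y < of_nat n * (x - 1)"
    using ex_less_of_nat_mult [of "x - 1" y] assms by auto
  also have "\<dots> \<le> x ^ n"
    using Bernoulli_inequality [of "x - 1" n] assms by simp
  finally show ?thesis ..
qed

lemma scaling_factor_ge_1:
  fixes Q :: "'v \<Rightarrow> 'a :: archimedean_field"
  assumes maps: "f ` L \<subseteq> L" and scales: "\<And>v. v \<in> L \<Longrightarrow> Q (f v) = \<mu> * Q v"
    and discrete: "\<And>v. v \<in> L \<Longrightarrow> 0 < Q v \<Longrightarrow> c \<le> Q v" and "0 < c"
    and "v0 \<in> L" "0 < Q v0" "0 < \<mu>"
  shows "1 \<le> \<mu>"
proof (rule ccontr)
  assume "\<not> 1 \<le> \<mu>"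
  then obtain n where n: "Q v0 / c < (1 / \<mu>) ^ n"
    using ex_less_power [of "1 / \<mu>"] \<open>0 < \<mu>\<close> by auto
  have iter: "(f ^^ n) v0 \<in> L \<and> Q ((f ^^ n) v0) = \<mu> ^ n * Q v0" for n
    by (induction n) (use \<open>v0 \<in> L\<close> maps scales in auto)
  then have "c \<le> \<mu> ^ n * Q v0"
    using discrete \<open>0 < Q v0\<close> \<open>0 < \<mu>\<close> by force
  then show False
    using n \<open>0 < c\<close> \<open>0 < \<mu>\<close> by (simp add: field_simps power_one_over)
qed

lemma scaling_factor_eq_1:
  fixes Q :: "'v \<Rightarrow> 'a :: archimedean_field"
  assumes bij: "f ` L = L" and scales: "\<And>v. v \<in> L \<Longrightarrow> Q (f v) = \<mu> * Q v"
    and nonneg: "\<And>v. v \<in> L \<Longrightarrow> 0 \<le> Q v"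
    and discrete: "\<And>v. v \<in> L \<Longrightarrow> 0 < Q v \<Longrightarrow> c \<le> Q v" and "0 < c"
    and "v0 \<in> L" "0 < Q v0" "\<mu> \<noteq> 0"
  shows "\<mu> = 1"
proof -
  have "0 \<le> \<mu> * Q v0"
    using nonneg scales bij \<open>v0 \<in> L\<close> by (metis image_eqI)
  with \<open>0 < Q v0\<close> \<open>\<mu> \<noteq> 0\<close> have "0 < \<mu>"
    by (simp add: zero_le_mult_iff)
  define g where "g = inv_into L f"
  have "g ` L \<subseteq> L" and "\<And>v. v \<in> L \<Longrightarrow> f (g v) = v"
    unfolding g_def using bij by (auto simp: inv_into_into f_inv_into_f)
  then have "Q (g v) = (1 / \<mu>) * Q v" if "v \<in> L" for v
    using scales [of "g v"] that \<open>0 < \<mu>\<close> by auto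
  then have "1 \<le> 1 / \<mu>"
    using scaling_factor_ge_1 [of g L Q "1 / \<mu>" c v0] \<open>g ` L \<subseteq> L\<close> assms(4-7) \<open>0 < \<mu>\<close>
    by auto
  moreover have "1 \<le> \<mu>"
    using scaling_factor_ge_1 [of f L Q \<mu> c v0] bij scales assms(4-7) \<open>0 < \<mu>\<close> by auto
  ultimately show ?thesis
    using \<open>0 < \<mu>\<close> by (simp add: field_simps)
qed

lemma ram_inf_imp_neg:
  assumes "ram_inf a b"
  shows "a < 0" "b < 0"
proof -
  have "(x0, x1, x2, x3) = (0, 0, 0, 0)"
    if "x0^2 - of_int a * x1^2 - of_int b * x2^2 + of_int a * of_int b * x3^2 = (0 :: real)"
    for x0 x1 x2 x3
    using assms that unfolding ram_inf_def by blast
  from this [of "sqrt (of_int a)" 1 0 0] this [of "sqrt (of_int b)" 0 1 0]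
  show "a < 0" "b < 0"
    by (fastforce simp: not_less [symmetric])+
qed

lemma nrd_pos:
  assumes "a < 0" "b < 0" "x \<noteq> qzero"
  shows "0 < nrd a b x"
proof (cases x)
  case (Quat x0 x1 x2 x3)
  define A B where "A = rat_of_int (- a)" and "B = rat_of_int (- b)"
  have "0 < A" "0 < B"
    using assms(1,2) by (simp_all add: A_def B_def)
  have nrd: "nrd a b x = x0^2 + A * x1^2 + B * x2^2 + (A * B) * x3^2"
    by (simp add: nrd_def Quat A_def B_def)
  have "x0 \<noteq> 0 \<or> x1 \<noteq> 0 \<or> x2 \<noteq> 0 \<or> x3 \<noteq> 0"
    using assms(3) by (auto simp: Quat qzero_def qrat_def)
  then have "0 < x0^2 \<or> 0 < A * x1^2 \<or> 0 < B * x2^2 \<or> 0 < (A * B) * x3^2"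
    using \<open>0 < A\<close> \<open>0 < B\<close> by auto
  moreover have "0 \<le> x0^2" "0 \<le> A * x1^2" "0 \<le> B * x2^2" "0 \<le> (A * B) * x3^2"
    using \<open>0 < A\<close> \<open>0 < B\<close> by simp_all
  ultimately show ?thesis
    unfolding nrd by linarith
qed

lemma nrd_nonneg: "a < 0 \<Longrightarrow> b < 0 \<Longrightarrow> 0 \<le> nrd a b x"
  using nrd_pos [of a b x] by (cases "x = qzero") (auto simp: nrd_def qzero_def qrat_def)

lemma hnorm_nonneg: "a < 0 \<Longrightarrow> b < 0 \<Longrightarrow> 0 \<le> hnorm a b v"
  by (cases v) (simp add: nrd_nonneg)

lemma hnorm_pos: "a < 0 \<Longrightarrow> b < 0 \<Longrightarrow> v \<noteq> (qzero, qzero) \<Longrightarrow> 0 < hnorm a b v"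
  by (cases v) (auto intro: add_pos_nonneg add_nonneg_pos nrd_pos nrd_nonneg)

fun quat_coords :: "quat \<Rightarrow> rat set" where
  "quat_coords (Quat x0 x1 x2 x3) = {x0, x1, x2, x3}"

definition quat_integral :: "quat \<Rightarrow> bool" where
  "quat_integral x \<longleftrightarrow> quat_coords x \<subseteq> \<int>"

lemma quat_integral_qadd: "quat_integral x \<Longrightarrow> quat_integral y \<Longrightarrow> quat_integral (qadd x y)"
  by (cases x; cases y) (auto simp: quat_integral_def)

lemma quat_integral_qmul: "quat_integral x \<Longrightarrow> quat_integral y \<Longrightarrow> quat_integral (qmul a b x y)"
  by (cases x; cases y) (auto simp: quat_integral_def Let_def)

lemma quat_integral_qsmul: "quat_integral x \<Longrightarrow> quat_integral (qsmul (of_int n) x)"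
  by (cases x) (auto simp: quat_integral_def)

lemma nrd_integral: "quat_integral x \<Longrightarrow> nrd a b x \<in> \<int>"
  by (cases x) (auto simp: quat_integral_def nrd_def)

lemma qsmul_qadd: "qsmul c (qadd x y) = qadd (qsmul c x) (qsmul c y)"
  by (cases x; cases y) (simp add: algebra_simps)

lemma qsmul_qsmul: "qsmul c (qsmul d x) = qsmul (c * d) x"
  by (cases x) simp

lemma qsmul_qmul: "qsmul (c * d) (qmul a b x y) = qmul a b (qsmul c x) (qsmul d y)"
  by (cases x; cases y) (simp add: Let_def algebra_simps)

lemma nrd_qsmul: "nrd a b (qsmul c x) = c^2 * nrd a b x"
  by (cases x) (simp add: nrd_def algebra_simps power2_eq_square)

lemma rat_common_denominator:
  fixes R :: "rat set"
  shows "finite R \<Longrightarrow> \<exists>d :: int. 0 < d \<and> (\<forall>r\<in>R. of_int d * r \<in> \<int>)"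
proof (induction R rule: finite_induct)
  case empty
  show ?case by (intro exI [of _ 1]) simp
next
  case (insert r R)
  then obtain d where "0 < d" and d: "\<forall>s\<in>R. of_int d * s \<in> \<int>"
    by blast
  obtain n e where ne: "quotient_of r = (n, e)"
    by (cases "quotient_of r")
  then have "0 < e"
    by (rule quotient_of_denom_pos)
  then have "of_int e * r = of_int n"
    using quotient_of_div [OF ne] by simp
  have "of_int (d * e) * s \<in> \<int>" if "s \<in> insert r R" for s
  proof (cases "s = r")
    case True
    then show ?thesis
      using \<open>of_int e * r = of_int n\<close> by (simp add: mult.assoc)
  next
    case False
    then have "of_int e * (of_int d * s) \<in> \<int>"
      using d that by auto
    then show ?thesis
      by (simp add: mult_ac)
  qed
  then show ?case
    using \<open>0 < d\<close> \<open>0 < e\<close> by (intro exI [of _ "d * e"]) simp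
qed

lemma quat_coords_qsmul: "quat_coords (qsmul c x) = (\<lambda>r. c * r) ` quat_coords x"
  by (cases x) simp

lemma finite_quat_coords: "finite (quat_coords x)"
  by (cases x) simp

lemma quat_common_denominator:
  assumes "finite S"
  shows "\<exists>d :: int. 0 < d \<and> (\<forall>x\<in>S. quat_integral (qsmul (of_int d) x))"
proof -
  obtain d :: int where "0 < d" and "\<forall>r\<in>\<Union> (quat_coords ` S). of_int d * r \<in> \<int>"
    using rat_common_denominator [of "\<Union> (quat_coords ` S)"] assms finite_quat_coords by blast
  then show ?thesis
    by (auto simp: quat_integral_def quat_coords_qsmul)
qed

lemma qlin4_add: "qadd (qlin4 c e) (qlin4 d e) = qlin4 (\<lambda>i. c i + d i) e"
proof -
  have smul_add: "qadd (qsmul c x) (qsmul d x) = qsmul (c + d) x" for c d x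
    by (cases x) (simp add: algebra_simps)
  show ?thesis
    unfolding qlin4_def by (simp add: qadd_ac flip: smul_add)
qed

lemma qlin4_zero: "qlin4 (\<lambda>i. 0) e = qzero"
proof -
  have "qsmul 0 x = qzero" for x
    by (cases x) (simp add: qzero_def qrat_def)
  then show ?thesis
    unfolding qlin4_def by simp
qed

lemma mentries_subset_of_rows:
  assumes "vecmat a b (qone, qzero) M \<in> R \<times> R" "vecmat a b (qzero, qone) M \<in> R \<times> R"
  shows "mentries M \<subseteq> R"
  using assms by (cases M) simp

lemma lattice_eq_image: "lattice a b R g = (\<lambda>u. vecmat a b u g) ` (R \<times> R)"
  by (auto simp: lattice_def)

lemma vecmat_image_lattice: "(\<lambda>v. vecmat a b v M) ` lattice a b R g = lattice a b R (mmul a b g M)"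
  by (simp add: lattice_eq_image image_image vecmat_mmul)

lemma quat_integral_scaled_qmul:
  assumes "quat_integral (qsmul (of_int d) x)" "quat_integral (qsmul (of_int d) y)"
  shows "quat_integral (qsmul (of_int d * of_int d) (qmul a b x y))"
  using quat_integral_qmul [OF assms] by (simp add: qsmul_qmul)

lemma vecmat_scaled_integral:
  assumes "\<forall>x\<in>{fst u, snd u} \<union> mentries A. quat_integral (qsmul (of_int d) x)"
  shows "quat_integral (qsmul (of_int d * of_int d) (fst (vecmat a b u A)))"
    and "quat_integral (qsmul (of_int d * of_int d) (snd (vecmat a b u A)))"
proof -
  obtain x y m11 m12 m21 m22 where "u = (x, y)" "A = M2 m11 m12 m21 m22"
    by (cases u; cases A)
  with assms show "quat_integral (qsmul (of_int d * of_int d) (fst (vecmat a b u A)))"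
    and "quat_integral (qsmul (of_int d * of_int d) (snd (vecmat a b u A)))"
    by (simp_all add: qsmul_qadd quat_integral_qadd quat_integral_scaled_qmul)
qed

context
  fixes a b :: int and R :: "quat set"
  assumes order: "is_order a b R"
begin

lemma order_qone: "qone \<in> R"
  using order by (simp add: is_order_def)

lemma order_qmul: "x \<in> R \<Longrightarrow> y \<in> R \<Longrightarrow> qmul a b x y \<in> R"
  using order by (simp add: is_order_def)

lemma order_basis: obtains e where "R = {qlin4 (\<lambda>i. of_int (n i)) e | n. True}"
  using order by (auto simp: is_order_def)

lemma order_qzero: "qzero \<in> R"
proof -
  obtain e where e: "R = {qlin4 (\<lambda>i. of_int (n i)) e | n. True}"
    by (rule order_basis)
  show ?thesis
    unfolding e by (intro CollectI exI [of _ "\<lambda>_. 0"]) (simp add: qlin4_zero)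
qed

lemma order_qadd: "x \<in> R \<Longrightarrow> y \<in> R \<Longrightarrow> qadd x y \<in> R"
proof -
  assume "x \<in> R" "y \<in> R"
  obtain e where e: "R = {qlin4 (\<lambda>i. of_int (n i)) e | n. True}"
    by (rule order_basis)
  then obtain n m where "x = qlin4 (\<lambda>i. of_int (n i)) e" "y = qlin4 (\<lambda>i. of_int (m i)) e"
    using \<open>x \<in> R\<close> \<open>y \<in> R\<close> by auto
  then show ?thesis
    unfolding e by (intro CollectI exI [of _ "\<lambda>i. n i + m i"]) (simp add: qlin4_add)
qed

lemma vecmat_in_order:
  "u \<in> R \<times> R \<Longrightarrow> mentries k \<subseteq> R \<Longrightarrow> vecmat a b u k \<in> R \<times> R"
  by (cases u; cases k) (auto intro!: order_qadd order_qmul)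

lemma order_common_denominator:
  assumes "finite S"
  shows "\<exists>d :: int. 0 < d \<and> (\<forall>x\<in>R \<union> S. quat_integral (qsmul (of_int d) x))"
proof -
  obtain e where e: "R = {qlin4 (\<lambda>i. of_int (n i)) e | n. True}"
    by (rule order_basis)
  obtain d :: int where "0 < d" and d: "\<forall>x\<in>e ` {0..3} \<union> S. quat_integral (qsmul (of_int d) x)"
    using quat_common_denominator [of "e ` {0..3} \<union> S"] assms by blast
  have "quat_integral (qsmul (of_int d) (qlin4 (\<lambda>i. of_int (n i)) e))" for n
  proof -
    have "quat_integral (qsmul (of_int d) (qsmul (of_int m) (e i)))" if "i \<in> {0..3}" for m i
      using d that quat_integral_qsmul [of "qsmul (of_int d) (e i)" m]
      by (simp add: qsmul_qsmul mult.commute)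
    then show ?thesis
      unfolding qlin4_def qsmul_qadd by (intro quat_integral_qadd) auto
  qed
  then show ?thesis
    using \<open>0 < d\<close> d e by blast
qed

lemma lattice_hnorm_discrete:
  "\<exists>c > 0. \<forall>v\<in>lattice a b R g. 0 < hnorm a b v \<longrightarrow> c \<le> hnorm a b v"
proof -
  obtain d :: int where "0 < d" and d: "\<forall>x\<in>R \<union> mentries g. quat_integral (qsmul (of_int d) x)"
    using order_common_denominator [ of "mentries g"] by (cases g) auto
  define D where "D = rat_of_int ((d * d)^2)"
  have "0 < D"
    using \<open>0 < d\<close> by (simp add: D_def)
  have "D * hnorm a b v \<in> \<int>" if v: "v \<in> lattice a b R g" for v
  proof -
    obtain x y where u: "(x, y) \<in> R \<times> R" "v = vecmat a b (x, y) g"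
      using v by (auto simp: lattice_def)
    then have "\<forall>x\<in>{fst (x, y), snd (x, y)} \<union> mentries g. quat_integral (qsmul (of_int d) x)"
      using d by auto
    from vecmat_scaled_integral [OF this, of a b]
    have "nrd a b (qsmul (of_int d * of_int d) (fst v)) \<in> \<int>" "nrd a b (qsmul (of_int d * of_int d) (snd v)) \<in> \<int>"
      using u by (simp_all add: nrd_integral)
    then show ?thesis
      by (cases v) (simp add: D_def nrd_qsmul distrib_left)
  qed
  moreover have "1 \<le> r" if "r \<in> \<int>" "0 < r" for r :: rat
    using that by (elim Ints_cases) simp
  ultimately have "1 / D \<le> hnorm a b v" if "v \<in> lattice a b R g" "0 < hnorm a b v" for v
    using that \<open>0 < D\<close> by (simp add: divide_le_eq mult.commute)
  then show ?thesis
    using \<open>0 < D\<close> by (intro exI [of _ "1 / D"]) auto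
qed

lemma unit_rows_in_lattice:
  "vecmat a b (qone, qzero) g \<in> lattice a b R g" "vecmat a b (qzero, qone) g \<in> lattice a b R g"
  using order_qone order_qzero by (auto simp: lattice_def)

lemma vecmat_image_order_square:
  assumes "in_GL2O a b R k"
  shows "(\<lambda>u. vecmat a b u k) ` (R \<times> R) = R \<times> R"
proof -
  obtain k' where k: "mentries k \<subseteq> R" and k': "mentries k' \<subseteq> R"
    and "mmul a b k' k = mid"
    using assms by (auto simp: in_GL2O_def)
  have "u \<in> (\<lambda>u. vecmat a b u k) ` (R \<times> R)" if "u \<in> R \<times> R" for u
  proof (rule image_eqI)
    show "u = vecmat a b (vecmat a b u k') k"
      using \<open>mmul a b k' k = mid\<close> by (simp add: vecmat_mmul)
    show "vecmat a b u k' \<in> R \<times> R"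
      using vecmat_in_order [OF that k'] .
  qed
  moreover have "vecmat a b u k \<in> R \<times> R" if "u \<in> R \<times> R" for u
    using vecmat_in_order [OF that k] .
  ultimately show ?thesis
    by blast
qed

lemma lattice_mmul_GL2O:
  assumes "in_GL2O a b R k"
  shows "lattice a b R (mmul a b k g) = lattice a b R g"
proof -
  have "lattice a b R (mmul a b k g) = (\<lambda>u. vecmat a b u g) ` (\<lambda>u. vecmat a b u k) ` (R \<times> R)"
    by (simp add: lattice_eq_image image_image vecmat_mmul)
  then show ?thesis
    by (simp add: vecmat_image_order_square [OF assms] lattice_eq_image)
qed

lemma lattice_subset_imp_mentries:
  assumes "mmul a b g h = mid" and "lattice a b R G \<subseteq> lattice a b R g"
  shows "mentries (mmul a b G h) \<subseteq> R"
proof (rule mentries_subset_of_rows)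
  have "vecmat a b e (mmul a b G h) \<in> R \<times> R"
    if row: "vecmat a b e G \<in> lattice a b R g" for e
  proof -
    obtain u where u: "u \<in> R \<times> R" "vecmat a b e G = vecmat a b u g"
      using row unfolding lattice_eq_image by blast
    have "vecmat a b e (mmul a b G h) = vecmat a b (vecmat a b u g) h"
      by (simp add: vecmat_mmul u(2) [symmetric])
    also have "\<dots> = u"
      by (simp add: vecmat_mmul assms(1))
    finally show ?thesis
      using u(1) by simp
  qed
  then show "vecmat a b (qone, qzero) (mmul a b G h) \<in> R \<times> R"
    and "vecmat a b (qzero, qone) (mmul a b G h) \<in> R \<times> R"
    using unit_rows_in_lattice assms(2) by blast+
qed

lemma lattice_eq_imp_GL2O:
  assumes "mmul a b g h = mid" "mmul a b h g = mid" "mmul a b G H = mid" "mmul a b H G = mid"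
    and "lattice a b R G = lattice a b R g"
  shows "\<exists>k. in_GL2O a b R k \<and> mmul a b k g = G"
proof (intro exI conjI)
  have cancel: "mmul a b h (mmul a b g X) = X" "mmul a b H (mmul a b G X) = X" for X
    using assms(2,4) by (simp_all flip: mmul_assoc)
  show "in_GL2O a b R (mmul a b G h)"
    unfolding in_GL2O_def
  proof (intro conjI exI)
    show "mentries (mmul a b G h) \<subseteq> R" "mentries (mmul a b g H) \<subseteq> R"
      using lattice_subset_imp_mentries assms by auto
    show "mmul a b (mmul a b G h) (mmul a b g H) = mid" "mmul a b (mmul a b g H) (mmul a b G h) = mid"
      using assms(1,3) by (simp_all add: mmul_assoc cancel)
  qed
  show "mmul a b (mmul a b G h) g = G"
    using assms(2) by (simp add: mmul_assoc)
qed

lemma lattice_stabiliser_left_inverse: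
  assumes "mmul a b h g = mid" "mmul a b \<gamma> \<delta> = mid"
    and stab: "(\<lambda>v. vecmat a b v \<gamma>) ` lattice a b R g = lattice a b R g"
  shows "mmul a b \<delta> \<gamma> = mid"
proof -
  have fix_lattice: "vecmat a b v (mmul a b \<delta> \<gamma>) = v" if v: "v \<in> lattice a b R g" for v
  proof -
    obtain w where w: "v = vecmat a b w \<gamma>"
      using v stab by blast
    have "vecmat a b v (mmul a b \<delta> \<gamma>) = vecmat a b w (mmul a b (mmul a b \<gamma> \<delta>) \<gamma>)"
      by (simp add: w vecmat_mmul mmul_assoc)
    then show ?thesis
      by (simp add: assms(2) w)
  qed
  have "mmul a b g (mmul a b \<delta> \<gamma>) = g"
    by (rule m2_eqI_rows [where a = a and b = b])
      (simp_all only: vecmat_mmul [symmetric, of a b _ g] fix_lattice unit_rows_in_lattice)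
  then have "mmul a b (mmul a b h g) (mmul a b \<delta> \<gamma>) = mmul a b h g"
    by (simp add: mmul_assoc)
  then show ?thesis
    using assms(1) by simp
qed

lemma lattice_similitude_factor_eq_1:
  assumes "a < 0" "b < 0" "mmul a b g h = mid"
    and sim: "mmul a b \<gamma> (mstar \<gamma>) = mscal \<mu>" "\<mu> \<noteq> 0"
    and stab: "(\<lambda>v. vecmat a b v \<gamma>) ` lattice a b R g = lattice a b R g"
  shows "\<mu> = 1"
proof -
  obtain c where "0 < c" and c: "\<forall>v\<in>lattice a b R g. 0 < hnorm a b v \<longrightarrow> c \<le> hnorm a b v"
    using lattice_hnorm_discrete by blast
  define v0 where "v0 = vecmat a b (qone, qzero) g"
  have "vecmat a b v0 h = (qone, qzero)"
    using assms(3) by (simp add: v0_def vecmat_mmul)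
  then have "v0 \<noteq> (qzero, qzero)"
    by auto
  then have "0 < hnorm a b v0"
    using hnorm_pos [OF assms(1,2)] by blast
  moreover have "v0 \<in> lattice a b R g"
    unfolding v0_def by (rule unit_rows_in_lattice)
  ultimately show ?thesis
    using scaling_factor_eq_1 [OF stab, of "hnorm a b" \<mu> c v0] sim \<open>0 < c\<close> c
      hnorm_vecmat_similitude hnorm_nonneg [OF assms(1,2)] by blast
qed


lemma Gamma2_imp_SU_conj_GL2O:
  assumes "a < 0" "b < 0" and gh: "mmul a b g h = mid" and hg: "mmul a b h g = mid"
    and "\<gamma> \<in> Gamma2 a b R g"
  shows "in_SU a b \<gamma> \<and> (\<exists>k. in_GL2O a b R k \<and> mmul a b g \<gamma> = mmul a b k g)"
proof -
  obtain \<mu> where sim: "mmul a b \<gamma> (mstar \<gamma>) = mscal \<mu>" "\<mu> \<noteq> 0"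
    and stab: "(\<lambda>v. vecmat a b v \<gamma>) ` lattice a b R g = lattice a b R g"
    using assms(5) by (auto simp: Gamma2_def in_GU_def)
  have "\<mu> = 1"
    using lattice_similitude_factor_eq_1 [OF assms(1,2) gh sim stab] .
  then have unitary: "mmul a b \<gamma> (mstar \<gamma>) = mid"
    using sim by (simp add: mid_def)
  have "mmul a b (mstar \<gamma>) \<gamma> = mid"
    using lattice_stabiliser_left_inverse [OF hg unitary stab] .
  then have "mmul a b (mmul a b (mstar \<gamma>) h) (mmul a b g \<gamma>) = mid"
    using hg by (simp add: mmul_assoc flip: mmul_assoc [of a b h g])
  moreover have "mmul a b (mmul a b g \<gamma>) (mmul a b (mstar \<gamma>) h) = mid"
    using unitary gh by (simp add: mmul_assoc flip: mmul_assoc [of a b _ _ h])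
  moreover have "lattice a b R (mmul a b g \<gamma>) = lattice a b R g"
    using stab by (simp add: vecmat_image_lattice)
  ultimately obtain k where "in_GL2O a b R k" "mmul a b k g = mmul a b g \<gamma>"
    using lattice_eq_imp_GL2O [OF gh hg] by blast
  with unitary show ?thesis
    by (auto simp: in_SU_def)
qed

lemma SU_conj_GL2O_imp_Gamma2:
  assumes "in_SU a b \<gamma>" "in_GL2O a b R k" "mmul a b g \<gamma> = mmul a b k g"
  shows "\<gamma> \<in> Gamma2 a b R g"
  using assms by (auto simp: Gamma2_def in_GU_def in_SU_def mid_def vecmat_image_lattice
    lattice_mmul_GL2O intro!: exI [of _ 1])

end

theorem theorem5p1:
  fixes a b p :: int and \<O> :: "quat set" and g :: m2
  assumes "prime p"
    and "ramified_exactly_p_inf a b p"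
    and "is_max_order a b \<O>"
    and "in_GL2 a b g"
    and "nonprincipal_genus a b \<O> p g"
  shows "Gamma2 a b \<O> g =
           {\<gamma>. in_SU a b \<gamma> \<and> (\<exists>k. in_GL2O a b \<O> k \<and> mmul a b g \<gamma> = mmul a b k g)}"
proof -
  have order: "is_order a b \<O>"
    using assms(3) by (simp add: is_max_order_def)
  have "a < 0" "b < 0"
    using assms(2) ram_inf_imp_neg by (auto simp: ramified_exactly_p_inf_def)
  obtain h where "mmul a b g h = mid" "mmul a b h g = mid"
    using assms(4) by (auto simp: in_GL2_def)
  then show ?thesis
    using Gamma2_imp_SU_conj_GL2O [OF order \<open>a < 0\<close> \<open>b < 0\<close>]
      SU_conj_GL2O_imp_Gamma2 [OF order] by blast
qed

end
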